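(* Let $G$ be a locally compact group, $K$ a compact subgroup of $G$, and $\omega$ a $K$-bi-invariant weight on $G$. Then for every $f \in C_c(K\setminus G/K)$ and every $h \in C_c(G)$, $$(h \ast_\omega f)^{\sharp} = h^{\sharp} \ast_\omega f.$$
   Context: A weight on $G$ is a continuous function $\omega: G \to (0,\infty)$; it is $K$-bi-invariant if $\omega(k_1 x k_2)=\omega(x)$ for all $x\in G$, $k_1,k_2\in K$. Integration on $G$ is with respect to a fixed left Haar measure, and on $K$ with respect to the normalized Haar measure of $K$. The weighted convolution is $(f \ast_\omega g)(x) = \int_G f(y) g(y^{-1}x) \frac{\omega(y)\omega(y^{-1}x)}{\omega(x)}\,dy$. $C_c(G)$ is the space of continuous compactly supported complex functions on $G$, and $C_c(K\setminus G/K)$ the subspace of $K$-bi-invariant ones. For a function $f$ on $G$, $f^{\sharp}(x) = \int_K\int_K f(k_1 x k_2)\,dk_1\,dk_2$. *)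

theory Defs
  imports "HOL-Analysis.Analysis"
begin

text \<open>The group G is a type 'a of class topological_group_add (a possibly
non-commutative group written additively: x + y is the product, -y the inverse,
so y^{-1}x is written -y + x), Hausdorff, and assumed locally compact.\<close>

definition compact_subgroup :: "'a::topological_group_add set \<Rightarrow> bool" where
  "compact_subgroup K \<longleftrightarrow> compact K \<and> 0 \<in> K \<and>
     (\<forall>a\<in>K. \<forall>b\<in>K. a + b \<in> K) \<and> (\<forall>a\<in>K. - a \<in> K)"

definition radon_regular :: "'a::topological_space measure \<Rightarrow> bool" where
  "radon_regular \<mu> \<longleftrightarrow>
     (\<forall>A\<in>sets borel. emeasure \<mu> A = (INF U\<in>{U. open U \<and> A \<subseteq> U}. emeasure \<mu> U)) \<and>
     (\<forall>U. open U \<longrightarrow> emeasure \<mu> U = (SUP C\<in>{C. compact C \<and> C \<subseteq> U}. emeasure \<mu> C))"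

definition left_haar_measure :: "'a::topological_group_add measure \<Rightarrow> bool" where
  "left_haar_measure \<mu> \<longleftrightarrow> sets \<mu> = sets borel \<and>
     (\<forall>g. \<forall>A\<in>sets borel. emeasure \<mu> ((+) g ` A) = emeasure \<mu> A) \<and>
     (\<forall>C. compact C \<longrightarrow> emeasure \<mu> C < \<infinity>) \<and>
     (\<forall>U. open U \<and> U \<noteq> {} \<longrightarrow> emeasure \<mu> U > 0) \<and>
     radon_regular \<mu>"

text \<open>The normalized Haar measure of the compact subgroup K, realized as a Borel
measure on G concentrated on K.\<close>
definition normalized_haar_on :: "'a::topological_group_add set \<Rightarrow> 'a measure \<Rightarrow> bool" where
  "normalized_haar_on K \<nu> \<longleftrightarrow> sets \<nu> = sets borel \<and>
     emeasure \<nu> K = 1 \<and> emeasure \<nu> (- K) = 0 \<and>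
     (\<forall>k\<in>K. \<forall>A\<in>sets borel. emeasure \<nu> ((+) k ` A) = emeasure \<nu> A) \<and>
     radon_regular \<nu>"

definition weight :: "('a::topological_space \<Rightarrow> real) \<Rightarrow> bool" where
  "weight \<omega> \<longleftrightarrow> continuous_on UNIV \<omega> \<and> (\<forall>x. \<omega> x > 0)"

definition bi_invariant :: "'a::group_add set \<Rightarrow> ('a \<Rightarrow> 'b) \<Rightarrow> bool" where
  "bi_invariant K f \<longleftrightarrow> (\<forall>x. \<forall>k1\<in>K. \<forall>k2\<in>K. f (k1 + x + k2) = f x)"

definition Cc :: "('a::topological_space \<Rightarrow> complex) set" where
  "Cc = {f. continuous_on UNIV f \<and> compact (closure {x. f x \<noteq> 0})}"

definition Cc_bi :: "'a::{group_add,topological_space} set \<Rightarrow> ('a \<Rightarrow> complex) set" where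
  "Cc_bi K = {f \<in> Cc. bi_invariant K f}"

definition wconv :: "'a::group_add measure \<Rightarrow> ('a \<Rightarrow> real) \<Rightarrow> ('a \<Rightarrow> complex) \<Rightarrow> ('a \<Rightarrow> complex) \<Rightarrow> 'a \<Rightarrow> complex" where
  "wconv \<mu> \<omega> f g x = (\<integral>y. f y * g (- y + x) * complex_of_real (\<omega> y * \<omega> (- y + x) / \<omega> x) \<partial>\<mu>)"

definition sharp :: "'a::group_add measure \<Rightarrow> ('a \<Rightarrow> complex) \<Rightarrow> 'a \<Rightarrow> complex" where
  "sharp \<nu> f x = (\<integral>k1. (\<integral>k2. f (k1 + x + k2) \<partial>\<nu>) \<partial>\<nu>)"

end

(*
  Fix x and put Phi(z) = f(z^-1 x) omega(z) omega(z^-1 x) / omega(x), so that (g *_omega f)(x)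
  is the Haar integral of g Phi.  As f and omega are right K-invariant, so is h *_omega f, and
  its sharp at x is the K-average of (h *_omega f)(k x); the left translation z -> k z and the
  left K-invariance of omega turn this into the integral of h(k z) Phi(z) over K x G.  On the
  other side Phi is right K-invariant, so after Fubini the integral of h(k1 z k2) Phi(z) =
  h(k1 z k2) Phi(z k2) over z loses k2 under the substitution z -> z k2^-1.  This substitution
  is legitimate because the modular function of G is trivial on the compact subgroup K: the
  identity  int a(y^-1) (int b(x y) dx) dy = int a * int b  shows that the ratio of
  int b(x y) dx to int b does not depend on b, and some right K-invariant b has int b <> 0.
  A Haar measure need not be sigma-finite, so Fubini's theorem is proved directly for
  continuous functions of compact support, by uniform approximation with functions that are
  step functions in one of the variables.
*)

theory Submission
  imports Defs
begin

lemma continuous_on_UNIV_compose: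
  "continuous_on UNIV g \<Longrightarrow> continuous_on UNIV \<phi> \<Longrightarrow> continuous_on UNIV (\<lambda>x. g (\<phi> x))"
  by (rule continuous_on_compose2[of UNIV g UNIV \<phi>]) auto

lemma continuous_on_UNIV_curry:
  assumes "continuous_on UNIV (\<lambda>p. F (fst p) (snd p))"
  shows "continuous_on UNIV (F x)"
  by (rule continuous_on_UNIV_compose[OF assms, of "Pair x", simplified]) (intro continuous_intros)

lemma continuous_on_prod_compact_uniformE:
  assumes "continuous_on UNIV (\<lambda>q. F (fst q) (snd q))" "compact B" "0 < e"
  obtains X where "p \<in> X" "open X"
    "\<And>x y. x \<in> X \<Longrightarrow> y \<in> B \<Longrightarrow> dist (F x y :: 'c::metric_space) (F p y) \<le> e"
proof -
  obtain X where "p \<in> X" "open X"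
    "\<forall>x\<in>X \<inter> UNIV. \<forall>y\<in>B. dist ((\<lambda>q. F (fst q) (snd q)) (x, y)) ((\<lambda>q. F (fst q) (snd q)) (p, y)) \<le> e"
    by (rule continuous_on_prod_compactE[OF continuous_on_subset[OF assms(1)] assms(2) UNIV_I assms(3)])
       auto
  then show thesis
    using that by auto
qed

lemma borel_measurable_continuous_on_UNIV:
  assumes "sets M = sets borel" and "continuous_on UNIV f"
  shows "f \<in> borel_measurable M"
  using borel_measurable_continuous_onI[OF assms(2)] by (simp add: measurable_cong_sets[OF assms(1) refl])

lemma integrable_continuous_vanishing_outside:
  fixes f :: "'a::t2_space \<Rightarrow> 'b::{banach, second_countable_topology}"
  assumes M: "sets M = sets borel" and f: "continuous_on UNIV f"
    and C: "compact C" "emeasure M C < \<infinity>" and vanish: "AE x in M. x \<notin> C \<longrightarrow> f x = 0"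
  shows "integrable M f"
proof -
  obtain B where B: "\<And>x. x \<in> C \<Longrightarrow> norm (f x) \<le> B"
    using compact_imp_bounded[OF compact_continuous_image[OF continuous_on_subset[OF f] C(1)]]
    by (auto simp: bounded_iff)
  have "C \<in> sets M"
    using M C(1) by (simp add: borel_closed compact_imp_closed)
  then have "integrable M (\<lambda>x. max B 0 * indicator C x :: real)"
    using C(2) by (simp add: integrable_indicator_iff)
  then show ?thesis
    by (rule Bochner_Integration.integrable_bound[OF _ borel_measurable_continuous_on_UNIV[OF M f]])
       (use vanish in \<open>eventually_elim, auto simp: indicator_def dest: B\<close>)
qed

lemma norm_integral_diff_le_indicator:
  fixes f g :: "'a \<Rightarrow> 'b::{banach, second_countable_topology}"
  assumes "integrable M f" "integrable M g" "B \<in> sets M" "emeasure M B < \<infinity>" "0 \<le> e"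
    and bound: "AE x in M. norm (f x - g x) \<le> e * indicator B x"
  shows "norm (integral\<^sup>L M f - integral\<^sup>L M g) \<le> e * measure M B"
proof -
  have "norm (integral\<^sup>L M f - integral\<^sup>L M g) = norm (\<integral>x. f x - g x \<partial>M)"
    using assms by simp
  also have "\<dots> \<le> (\<integral>x. norm (f x - g x) \<partial>M)"
    by (rule integral_norm_bound)
  also have "\<dots> \<le> (\<integral>x. e * indicator B x \<partial>M)"
    using assms by (intro integral_mono_AE') (auto simp: integrable_indicator_iff)
  also have "\<dots> = e * measure M B"
    using assms(3) by simp
  finally show ?thesis .
qed

lemma integral_pos_if_pos_on:
  fixes g :: "'a \<Rightarrow> real"
  assumes "integrable M g" "\<And>x. 0 \<le> g x"
    and S: "S \<in> sets M" "emeasure M S \<noteq> 0" and pos: "\<And>x. x \<in> S \<Longrightarrow> 0 < g x"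
  shows "0 < integral\<^sup>L M g"
proof -
  have "integral\<^sup>L M g \<noteq> 0"
  proof
    assume "integral\<^sup>L M g = 0"
    then have "AE x in M. g x = 0"
      using integral_nonneg_eq_0_iff_AE assms(1,2) by blast
    then have "AE x in M. x \<notin> S"
      by eventually_elim (use pos in force)
    then show False
      using S AE_iff_null_sets[OF S(1)] by auto
  qed
  moreover have "0 \<le> integral\<^sup>L M g"
    using assms(2) by (simp add: integral_nonneg)
  ultimately show ?thesis
    by simp
qed

lemma integral_left_translate:
  fixes f :: "'a::topological_group_add \<Rightarrow> 'b::{banach, second_countable_topology}"
  assumes M: "sets M = sets borel"
    and invariant: "\<And>A. A \<in> sets borel \<Longrightarrow> emeasure M ((+) g ` A) = emeasure M A"
    and f: "continuous_on UNIV f"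
  shows "(\<integral>x. f (g + x) \<partial>M) = integral\<^sup>L M f"
proof -
  have T: "(+) g \<in> measurable M M"
    using borel_measurable_continuous_onI[of "(+) g"] measurable_cong_sets[OF M M]
    by (simp add: continuous_on_add)
  have preimage: "(+) g -` A = (+) (- g) ` A" for A
    by (auto simp: image_iff add.assoc[symmetric]) (metis minus_add_cancel)
  have "distr M M ((+) g) = M"
  proof (rule measure_eqI)
    fix A assume "A \<in> sets (distr M M ((+) g))"
    then have A: "A \<in> sets M" by simp
    then have "(+) (- g) ` A \<in> sets borel"
      using measurable_sets[OF T A] M by (simp add: preimage sets_eq_imp_space_eq[OF M])
    moreover have "(+) g ` (+) (- g) ` A = A"
      by (auto simp: image_image add.assoc[symmetric])
    ultimately show "emeasure (distr M M ((+) g)) A = emeasure M A"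
      using A T invariant[of "(+) (- g) ` A"]
      by (simp add: emeasure_distr preimage sets_eq_imp_space_eq[OF M])
  qed simp
  then show ?thesis
    using integral_distr[OF T borel_measurable_continuous_on_UNIV[OF M f]] by simp
qed

lemma continuous_on_parametric_integral:
  fixes F :: "'a::topological_space \<Rightarrow> 'b::t2_space \<Rightarrow> 'c::{banach, second_countable_topology}"
  assumes M: "sets M = sets borel"
    and F: "continuous_on UNIV (\<lambda>p. F (fst p) (snd p))"
    and local_support: "\<And>p. \<exists>N B. open N \<and> p \<in> N \<and> compact B \<and> emeasure M B < \<infinity> \<and>
                 (AE y in M. y \<notin> B \<longrightarrow> (\<forall>x\<in>N. F x y = 0))"
  shows "continuous_on UNIV (\<lambda>x. \<integral>y. F x y \<partial>M)"
  unfolding continuous_on_def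
proof (intro ballI tendstoI)
  fix p :: 'a and e :: real
  assume "0 < e"
  obtain N B where NB: "open N" "p \<in> N" "compact B" "emeasure M B < \<infinity>"
    and vanish: "AE y in M. y \<notin> B \<longrightarrow> (\<forall>x\<in>N. F x y = 0)"
    using local_support by blast
  have B: "B \<in> sets M"
    using M NB(3) by (simp add: borel_closed compact_imp_closed)
  have integrable: "integrable M (F x)" if "x \<in> N" for x
    by (rule integrable_continuous_vanishing_outside[OF M continuous_on_UNIV_curry[OF F] NB(3,4)])
       (use vanish in \<open>eventually_elim, use that in auto\<close>)
  define d where "d = e / (measure M B + 1)"
  have "0 < d"
    using \<open>0 < e\<close> by (simp add: d_def add_nonneg_pos)
  then obtain X where X: "p \<in> X" "open X" "\<And>x y. x \<in> X \<Longrightarrow> y \<in> B \<Longrightarrow> dist (F x y) (F p y) \<le> d"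
    using continuous_on_prod_compact_uniformE[OF F NB(3)] by metis
  have "dist (\<integral>y. F x y \<partial>M) (\<integral>y. F p y \<partial>M) < e" if x: "x \<in> X \<inter> N" for x
  proof -
    have "dist (\<integral>y. F x y \<partial>M) (\<integral>y. F p y \<partial>M) \<le> d * measure M B"
      unfolding dist_norm
    proof (rule norm_integral_diff_le_indicator[OF integrable integrable B NB(4)])
      show "AE y in M. norm (F x y - F p y) \<le> d * indicator B y"
        using vanish by eventually_elim (use x NB(2) X(3) \<open>0 < d\<close> in \<open>auto simp: dist_norm\<close>)
    qed (use x NB(2) \<open>0 < d\<close> in auto)
    also have "\<dots> < e"
      using \<open>0 < e\<close> by (simp add: d_def divide_less_eq) (use measure_nonneg[of M B] in linarith)
    finally show ?thesis .
  qed
  then show "\<forall>\<^sub>F x in at p within UNIV. dist (\<integral>y. F x y \<partial>M) (\<integral>y. F p y \<partial>M) < e"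
    unfolding eventually_at_topological using X NB by (intro exI[of _ "X \<inter> N"]) auto
qed

section \<open>Functions of compact support\<close>

definition has_compact_support :: "('a::topological_space \<Rightarrow> 'b::zero) \<Rightarrow> bool" where
  "has_compact_support g \<longleftrightarrow> (\<exists>C. compact C \<and> (\<forall>x. x \<notin> C \<longrightarrow> g x = 0))"

lemma has_compact_supportE:
  fixes g :: "'a::topological_space \<Rightarrow> 'b::zero"
  assumes "has_compact_support g"
  obtains C where "compact C" "\<And>x. x \<notin> C \<Longrightarrow> g x = 0"
  using assms that unfolding has_compact_support_def by blast

lemma has_compact_support_mult_left:
  "has_compact_support g \<Longrightarrow> has_compact_support (\<lambda>x. g x * (f x :: 'b::mult_zero))"
  unfolding has_compact_support_def by (metis mult_zero_left)

lemma has_compact_support_mult_right: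
  "has_compact_support g \<Longrightarrow> has_compact_support (\<lambda>x. (f x :: 'b::mult_zero) * g x)"
  unfolding has_compact_support_def by (metis mult_zero_right)

lemma has_compact_support_comp_zero:
  "has_compact_support g \<Longrightarrow> h 0 = 0 \<Longrightarrow> has_compact_support (\<lambda>x. h (g x))"
  unfolding has_compact_support_def by metis

lemma has_compact_support_compose:
  fixes g :: "'a::topological_space \<Rightarrow> 'b::zero" and \<phi> :: "'c::topological_space \<Rightarrow> 'a"
  assumes g: "has_compact_support g" and \<psi>: "continuous_on UNIV \<psi>" and inverse: "\<And>x. \<psi> (\<phi> x) = x"
  shows "has_compact_support (\<lambda>x. g (\<phi> x))"
proof -
  obtain C where C: "compact C" "\<And>x. x \<notin> C \<Longrightarrow> g x = 0"
    using g has_compact_supportE by blast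
  have "x \<in> \<psi> ` C" if "\<phi> x \<in> C" for x
    using imageI[OF that, of \<psi>] inverse[of x] by simp
  then have "\<forall>x. x \<notin> \<psi> ` C \<longrightarrow> g (\<phi> x) = 0"
    using C(2) by blast
  moreover have "compact (\<psi> ` C)"
    by (rule compact_continuous_image[OF continuous_on_subset[OF \<psi> subset_UNIV] C(1)])
  ultimately show ?thesis
    unfolding has_compact_support_def by blast
qed

lemma has_compact_support_times:
  fixes a :: "'a::topological_space \<Rightarrow> 'c::mult_zero" and b :: "'b::topological_space \<Rightarrow> 'c"
  assumes "has_compact_support a" "has_compact_support b"
  shows "has_compact_support (\<lambda>p. a (fst p) * b (snd p))"
proof -
  obtain Ca Cb where "compact Ca" "\<And>x. x \<notin> Ca \<Longrightarrow> a x = 0" "compact Cb" "\<And>y. y \<notin> Cb \<Longrightarrow> b y = 0"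
    using assms has_compact_supportE by metis
  then have "compact (Ca \<times> Cb) \<and> (\<forall>p. p \<notin> Ca \<times> Cb \<longrightarrow> a (fst p) * b (snd p) = 0)"
    by (auto simp: compact_Times mem_Times_iff)
  then show ?thesis
    unfolding has_compact_support_def by blast
qed

lemma has_compact_support_Cc:
  assumes "f \<in> Cc"
  shows "has_compact_support f"
proof -
  have "f x = 0" if "x \<notin> closure {x. f x \<noteq> 0}" for x
    using that closure_subset[of "{x. f x \<noteq> 0}"] by auto
  then show ?thesis
    using assms unfolding Cc_def has_compact_support_def by blast
qed

lemma Hausdorff_space_euclidean_t2: "Hausdorff_space (euclidean :: 'a::t2_space topology)"
  unfolding Hausdorff_space_def disjnt_def by (simp; meson hausdorff)

lemma compact_neighbourhoodE:
  fixes S :: "'a::t2_space set"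
  assumes "locally_compact_space (euclidean :: 'a topology)" and "compact S"
  obtains U L where "open U" "compact L" "S \<subseteq> U" "U \<subseteq> L"
proof -
  have "compactin euclidean S"
    using assms(2) by simp
  with assms(1)[unfolded locally_compact_space_compact_closed_compact[OF disjI1[OF Hausdorff_space_euclidean_t2]]]
  obtain U L where "openin euclidean U" "compactin euclidean L" "S \<subseteq> U" "U \<subseteq> L"
    by meson
  then show thesis
    using that open_openin compactin_euclidean_iff by metis
qed

lemma Urysohn_compact_support:
  fixes S :: "'a::t2_space set"
  assumes lc: "locally_compact_space (euclidean :: 'a topology)" and S: "compact S"
  obtains u :: "'a \<Rightarrow> real" where "continuous_on UNIV u" "\<And>x. 0 \<le> u x"
    "\<And>x. x \<in> S \<Longrightarrow> u x = 1" "has_compact_support u"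
proof -
  obtain U L where UL: "open U" "compact L" "S \<subseteq> U" "U \<subseteq> L"
    using compact_neighbourhoodE[OF lc S] .
  have "completely_regular_space (euclidean :: 'a topology)"
    by (rule locally_compact_regular_imp_completely_regular_space[OF lc])
       (simp add: Hausdorff_space_euclidean_t2)
  moreover have "compactin euclidean S" "closedin euclidean (- U)" "disjnt S (- U)"
    using S UL(1,3) by (auto simp: disjnt_def simp flip: closed_closedin)
  ultimately obtain u where u: "continuous_map euclidean (top_of_set {0..1::real}) u"
    "u ` (- U) \<subseteq> {0}" "u ` S \<subseteq> {1}"
    by (rule Urysohn_completely_regular_compact_closed[OF zero_le_one])
  have u01: "continuous_on UNIV u \<and> u \<in> UNIV \<rightarrow> {0..1}"
    using u(1) unfolding continuous_map_in_subtopology by simp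
  show thesis
  proof (rule that)
    show "continuous_on UNIV u"
      using u01 by simp
    show "0 \<le> u x" for x
      using u01 by (simp add: Pi_iff)
    show "u x = 1" if "x \<in> S" for x
      using u(3) that by auto
    have "u x = 0" if "x \<notin> L" for x
      using that UL(4) u(2) by auto
    then show "has_compact_support u"
      unfolding has_compact_support_def using UL(2) by blast
  qed
qed

section \<open>Fubini's theorem for continuous functions of compact support\<close>

lemma step_partition_uniformly_close:
  fixes F :: "'a::t2_space \<Rightarrow> 'b::topological_space \<Rightarrow> 'c::metric_space"
  assumes M: "sets M = sets borel" and F: "continuous_on UNIV (\<lambda>q. F (fst q) (snd q))"
    and A: "compact A" and B: "compact B" and "0 < e"
  obtains n :: nat and c D where "\<And>i. D i \<in> sets M" "\<And>i. D i \<subseteq> A"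
    "disjoint_family_on D {..<n}" "A = (\<Union>i<n. D i)"
    "\<And>i x y. x \<in> D i \<Longrightarrow> y \<in> B \<Longrightarrow> dist (F x y) (F (c i) y) \<le> e"
proof -
  have "\<forall>p. \<exists>X. p \<in> X \<and> open X \<and> (\<forall>x\<in>X. \<forall>y\<in>B. dist (F x y) (F p y) \<le> e)"
    using continuous_on_prod_compact_uniformE[OF F B \<open>0 < e\<close>] by metis
  then obtain X where X: "\<And>p. p \<in> X p" "\<And>p. open (X p)"
    "\<And>p x y. x \<in> X p \<Longrightarrow> y \<in> B \<Longrightarrow> dist (F x y) (F p y) \<le> e"
    by metis
  obtain T where T: "finite T" "A \<subseteq> (\<Union>p\<in>T. X p)"
  proof (rule compactE_image[OF A, of A X])
    show "A \<subseteq> (\<Union>p\<in>A. X p)"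
      using X(1) by blast
  qed (use X(2) in auto)
  obtain n and c :: "nat \<Rightarrow> 'a" where T_eq: "T = c ` {i. i < n}"
    using finite_imp_nat_seg_image_inj_on[OF T(1)] by metis
  have A_sets: "A \<in> sets M" and X_sets: "\<And>p. X p \<in> sets M"
    using M A X(2) by (simp_all add: borel_closed compact_imp_closed borel_open)
  define D where "D = disjointed (\<lambda>i. A \<inter> X (c i))"
  have D_sub: "D i \<subseteq> A \<inter> X (c i)" for i
    unfolding D_def by (rule disjointed_subset)
  show thesis
  proof
    show "D i \<in> sets M" for i
      unfolding D_def disjointed_def using A_sets X_sets by (intro sets.Diff sets.Int sets.finite_UN) auto
    show "D i \<subseteq> A" for i
      using D_sub by blast
    show "disjoint_family_on D {..<n}"
      unfolding D_def by (rule disjoint_family_on_mono[OF subset_UNIV disjoint_family_disjointed])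
    have "(\<Union>i<n. D i) = (\<Union>i<n. A \<inter> X (c i))"
      unfolding D_def lessThan_atLeast0 by (rule finite_UN_disjointed_eq)
    then show "A = (\<Union>i<n. D i)"
      using T(2) by (auto simp: T_eq)
    show "dist (F x y) (F (c i) y) \<le> e" if "x \<in> D i" "y \<in> B" for i x y
      using D_sub that by (intro X(3)) auto
  qed
qed

lemma sum_indicator_scaleR_disjoint_family:
  fixes c :: "'i \<Rightarrow> 'b::real_vector"
  assumes "disjoint_family_on D I" "finite I" "i \<in> I" "x \<in> D i"
  shows "(\<Sum>j\<in>I. indicator (D j) x *\<^sub>R c j) = c i"
proof -
  have "(\<Sum>j\<in>I. indicator (D j) x *\<^sub>R c j) = (\<Sum>j\<in>{i}. indicator (D j) x *\<^sub>R c j)"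
    using assms by (intro sum.mono_neutral_right) (auto simp: disjoint_family_on_def indicator_def)
  then show ?thesis
    using assms(4) by simp
qed

lemma step_approximation_close:
  fixes F :: "'a \<Rightarrow> 'b \<Rightarrow> 'c::real_normed_vector" and n :: nat
  assumes D: "\<And>i. D i \<subseteq> A" "disjoint_family_on D {..<n}" "A = (\<Union>i<n. D i)"
    and close: "\<And>i x y. x \<in> D i \<Longrightarrow> y \<in> B \<Longrightarrow> dist (F x y) (F (c i) y) \<le> e" and "0 \<le> e"
    and vanish: "x \<notin> A \<longrightarrow> (\<forall>y. F x y = 0)" "y \<notin> B \<longrightarrow> (\<forall>x. F x y = 0)"
  shows "norm (F x y - (\<Sum>i<n. indicator (D i) x *\<^sub>R F (c i) y)) \<le> e * indicator A x * indicator B y"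
proof (cases "x \<in> A \<and> y \<in> B")
  case True
  then obtain i where "i < n" "x \<in> D i"
    using D(3) by blast
  then have "(\<Sum>i<n. indicator (D i) x *\<^sub>R F (c i) y) = F (c i) y"
    by (intro sum_indicator_scaleR_disjoint_family[OF D(2)]) auto
  then show ?thesis
    using close[OF \<open>x \<in> D i\<close>] True by (simp add: dist_norm)
next
  case False
  then have "F x y = 0" "(\<Sum>i<n. indicator (D i) x *\<^sub>R F (c i) y) = 0"
    using vanish D(1) by (auto simp: indicator_def intro!: sum.neutral) blast
  then show ?thesis
    using \<open>0 \<le> e\<close> by simp
qed

lemma AE_AE_outside_rectangle:
  assumes "AE x in M1. x \<notin> A \<longrightarrow> (\<forall>y. F x y = 0)" and "AE y in M2. y \<notin> B \<longrightarrow> (\<forall>x. F x y = 0)"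
    and P: "\<And>x y. x \<notin> A \<longrightarrow> (\<forall>y. F x y = 0) \<Longrightarrow> y \<notin> B \<longrightarrow> (\<forall>x. F x y = 0) \<Longrightarrow> P x y"
  shows "AE x in M1. AE y in M2. P x y" and "AE y in M2. AE x in M1. P x y"
proof -
  show "AE x in M1. AE y in M2. P x y"
    using assms(1)
  proof eventually_elim
    case (elim x)
    show ?case
      using assms(2) by eventually_elim (rule P[OF elim])
  qed
  show "AE y in M2. AE x in M1. P x y"
    using assms(2)
  proof eventually_elim
    case (elim y)
    show ?case
      using assms(1) by eventually_elim (rule P[OF _ elim])
  qed
qed

lemma iterated_integrals_close:
  fixes F R :: "'a \<Rightarrow> 'b \<Rightarrow> 'c::{banach, second_countable_topology}"
  assumes F: "\<And>x. integrable M2 (F x)" "integrable M1 (\<lambda>x. \<integral>y. F x y \<partial>M2)"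
    and R: "\<And>x. integrable M2 (R x)" "integrable M1 (\<lambda>x. \<integral>y. R x y \<partial>M2)"
    and A: "A \<in> sets M1" "emeasure M1 A < \<infinity>" and B: "B \<in> sets M2" "emeasure M2 B < \<infinity>"
    and "0 \<le> e"
    and close: "AE x in M1. AE y in M2. norm (F x y - R x y) \<le> e * indicator A x * indicator B y"
  shows "norm ((\<integral>x. (\<integral>y. F x y \<partial>M2) \<partial>M1) - (\<integral>x. (\<integral>y. R x y \<partial>M2) \<partial>M1))
    \<le> e * measure M2 B * measure M1 A"
proof (rule norm_integral_diff_le_indicator[OF F(2) R(2) A])
  show "0 \<le> e * measure M2 B"
    using \<open>0 \<le> e\<close> by simp
  show "AE x in M1. norm ((\<integral>y. F x y \<partial>M2) - (\<integral>y. R x y \<partial>M2)) \<le> e * measure M2 B * indicator A x"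
    using close
  proof eventually_elim
    case (elim x)
    have "norm ((\<integral>y. F x y \<partial>M2) - (\<integral>y. R x y \<partial>M2)) \<le> (e * indicator A x) * measure M2 B"
      by (rule norm_integral_diff_le_indicator[OF F(1) R(1) B]) (use elim \<open>0 \<le> e\<close> in auto)
    then show ?case
      by (simp add: ac_simps)
  qed
qed

lemma integrable_iterated_continuous_compact_support:
  fixes F :: "'a::t2_space \<Rightarrow> 'b::t2_space \<Rightarrow> 'c::{banach, second_countable_topology}"
  assumes M1: "sets M1 = sets borel" and M2: "sets M2 = sets borel"
    and A: "compact A" "emeasure M1 A < \<infinity>" and B: "compact B" "emeasure M2 B < \<infinity>"
    and F: "continuous_on UNIV (\<lambda>p. F (fst p) (snd p))"
    and vanish_A: "AE x in M1. x \<notin> A \<longrightarrow> (\<forall>y. F x y = 0)"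
    and vanish_B: "AE y in M2. y \<notin> B \<longrightarrow> (\<forall>x. F x y = 0)"
  shows "integrable M2 (F x)" and "integrable M1 (\<lambda>x. \<integral>y. F x y \<partial>M2)"
proof -
  show "integrable M2 (F x)" for x
    by (rule integrable_continuous_vanishing_outside[OF M2 continuous_on_UNIV_curry[OF F] B])
       (use vanish_B in \<open>eventually_elim, auto\<close>)
  have "continuous_on UNIV (\<lambda>x. \<integral>y. F x y \<partial>M2)"
  proof (rule continuous_on_parametric_integral[OF M2 F])
    have "AE y in M2. y \<notin> B \<longrightarrow> (\<forall>x\<in>UNIV. F x y = 0)"
      using vanish_B by simp
    then show "\<exists>N B. open N \<and> p \<in> N \<and> compact B \<and> emeasure M2 B < \<infinity> \<and>
      (AE y in M2. y \<notin> B \<longrightarrow> (\<forall>x\<in>N. F x y = 0))" for p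
      using B by blast
  qed
  then show "integrable M1 (\<lambda>x. \<integral>y. F x y \<partial>M2)"
    by (rule integrable_continuous_vanishing_outside[OF M1 _ A])
       (use vanish_A in \<open>eventually_elim, auto\<close>)
qed

lemma step_function_fubini:
  fixes G :: "'i \<Rightarrow> 'b \<Rightarrow> 'c::{banach, second_countable_topology}"
  assumes "finite I" and D: "\<And>i. D i \<in> sets M1" "\<And>i. emeasure M1 (D i) < \<infinity>"
    and G: "\<And>i. integrable M2 (G i)"
  defines "R \<equiv> \<lambda>x y. \<Sum>i\<in>I. indicator (D i) x *\<^sub>R G i y"
  shows "\<And>x. integrable M2 (R x)" and "integrable M1 (\<lambda>x. \<integral>y. R x y \<partial>M2)"
    and "\<And>y. integrable M1 (\<lambda>x. R x y)" and "integrable M2 (\<lambda>y. \<integral>x. R x y \<partial>M1)"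
    and "(\<integral>x. (\<integral>y. R x y \<partial>M2) \<partial>M1) = (\<integral>y. (\<integral>x. R x y \<partial>M1) \<partial>M2)"
proof -
  have indicator: "integrable M1 (indicator (D i) :: _ \<Rightarrow> real)" for i
    using D by (simp add: integrable_indicator_iff)
  have inner_y: "(\<integral>y. R x y \<partial>M2) = (\<Sum>i\<in>I. indicator (D i) x *\<^sub>R integral\<^sup>L M2 (G i))" for x
    unfolding R_def using G by simp
  have inner_x: "(\<integral>x. R x y \<partial>M1) = (\<Sum>i\<in>I. measure M1 (D i) *\<^sub>R G i y)" for y
    unfolding R_def using indicator D by simp
  show "integrable M2 (R x)" for x
    unfolding R_def using G by simp
  show "integrable M1 (\<lambda>x. R x y)" for y
    unfolding R_def using indicator by simp
  show "integrable M1 (\<lambda>x. \<integral>y. R x y \<partial>M2)"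
    unfolding inner_y using indicator by simp
  show "integrable M2 (\<lambda>y. \<integral>x. R x y \<partial>M1)"
    unfolding inner_x using G by simp
  show "(\<integral>x. (\<integral>y. R x y \<partial>M2) \<partial>M1) = (\<integral>y. (\<integral>x. R x y \<partial>M1) \<partial>M2)"
    unfolding inner_x inner_y using indicator G D by simp
qed

lemma fubini_continuous_compact_support_approx:
  fixes F :: "'a::t2_space \<Rightarrow> 'b::t2_space \<Rightarrow> 'c::{banach, second_countable_topology}"
  assumes M1: "sets M1 = sets borel" and M2: "sets M2 = sets borel"
    and A: "compact A" "emeasure M1 A < \<infinity>" and B: "compact B" "emeasure M2 B < \<infinity>"
    and F: "continuous_on UNIV (\<lambda>p. F (fst p) (snd p))"
    and vanish_A: "AE x in M1. x \<notin> A \<longrightarrow> (\<forall>y. F x y = 0)"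
    and vanish_B: "AE y in M2. y \<notin> B \<longrightarrow> (\<forall>x. F x y = 0)"
    and "0 < e"
  shows "norm ((\<integral>x. (\<integral>y. F x y \<partial>M2) \<partial>M1) - (\<integral>y. (\<integral>x. F x y \<partial>M1) \<partial>M2))
    \<le> 2 * e * measure M1 A * measure M2 B"
proof -
  have F_swap: "continuous_on UNIV (\<lambda>q. F (snd q) (fst q))"
    by (rule continuous_on_UNIV_compose[OF F, of "\<lambda>q. (snd q, fst q)", simplified])
       (intro continuous_intros)
  note F_int = integrable_iterated_continuous_compact_support[OF M1 M2 A B F vanish_A vanish_B]
  note F_int' = integrable_iterated_continuous_compact_support[OF M2 M1 B A F_swap vanish_B vanish_A]
  have A_sets: "A \<in> sets M1" and B_sets: "B \<in> sets M2"
    using A(1) B(1) M1 M2 by (simp_all add: borel_closed compact_imp_closed)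
  obtain n :: nat and c D where D: "\<And>i. D i \<in> sets M1" "\<And>i. D i \<subseteq> A"
    "disjoint_family_on D {..<n}" "A = (\<Union>i<n. D i)"
    "\<And>i x y. x \<in> D i \<Longrightarrow> y \<in> B \<Longrightarrow> dist (F x y) (F (c i) y) \<le> e"
    using step_partition_uniformly_close[OF M1 F A(1) B(1) \<open>0 < e\<close>] by metis
  have "emeasure M1 (D i) < \<infinity>" for i
    using emeasure_mono[OF D(2) A_sets, of i] A(2) by (rule le_less_trans)
  note R = step_function_fubini[of "{..<n}" D M1 M2 "\<lambda>i. F (c i)", OF finite_lessThan D(1) this F_int(1)]
  define R where "R x y = (\<Sum>i<n. indicator (D i) x *\<^sub>R F (c i) y)" for x y
  have close: "norm (F x y - R x y) \<le> e * indicator A x * indicator B y"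
    and close': "norm (F x y - R x y) \<le> e * indicator B y * indicator A x"
    if "x \<notin> A \<longrightarrow> (\<forall>y. F x y = 0)" and "y \<notin> B \<longrightarrow> (\<forall>x. F x y = 0)" for x y
    using step_approximation_close[OF D(2-5) less_imp_le[OF \<open>0 < e\<close>] that]
    by (simp_all add: R_def ac_simps)
  have "norm ((\<integral>x. (\<integral>y. F x y \<partial>M2) \<partial>M1) - (\<integral>x. (\<integral>y. R x y \<partial>M2) \<partial>M1))
      \<le> e * measure M2 B * measure M1 A"
    using \<open>0 < e\<close> AE_AE_outside_rectangle(1)[OF vanish_A vanish_B close]
    by (intro iterated_integrals_close[OF F_int R(1,2)[folded R_def] A_sets A(2) B_sets B(2)]) simp_all
  moreover have "norm ((\<integral>y. (\<integral>x. F x y \<partial>M1) \<partial>M2) - (\<integral>y. (\<integral>x. R x y \<partial>M1) \<partial>M2))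
      \<le> e * measure M1 A * measure M2 B"
    using \<open>0 < e\<close> AE_AE_outside_rectangle(2)[OF vanish_A vanish_B close']
    by (intro iterated_integrals_close[OF F_int' R(3,4)[folded R_def] B_sets B(2) A_sets A(2)]) simp_all
  ultimately show ?thesis
    using R(5)[folded R_def] norm_triangle_ineq4[of "(\<integral>x. (\<integral>y. F x y \<partial>M2) \<partial>M1) - (\<integral>x. (\<integral>y. R x y \<partial>M2) \<partial>M1)"
        "(\<integral>y. (\<integral>x. F x y \<partial>M1) \<partial>M2) - (\<integral>y. (\<integral>x. R x y \<partial>M1) \<partial>M2)"]
    by (simp add: ac_simps)
qed

lemma fubini_continuous_compact_support:
  fixes F :: "'a::t2_space \<Rightarrow> 'b::t2_space \<Rightarrow> 'c::{banach, second_countable_topology}"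
  assumes M1: "sets M1 = sets borel" and M2: "sets M2 = sets borel"
    and A: "compact A" "emeasure M1 A < \<infinity>" and B: "compact B" "emeasure M2 B < \<infinity>"
    and F: "continuous_on UNIV (\<lambda>p. F (fst p) (snd p))"
    and vanish_A: "AE x in M1. x \<notin> A \<longrightarrow> (\<forall>y. F x y = 0)"
    and vanish_B: "AE y in M2. y \<notin> B \<longrightarrow> (\<forall>x. F x y = 0)"
  shows "(\<integral>x. (\<integral>y. F x y \<partial>M2) \<partial>M1) = (\<integral>y. (\<integral>x. F x y \<partial>M1) \<partial>M2)"
proof -
  let ?d = "norm ((\<integral>x. (\<integral>y. F x y \<partial>M2) \<partial>M1) - (\<integral>y. (\<integral>x. F x y \<partial>M1) \<partial>M2))"
  define c where "c = 2 * measure M1 A * measure M2 B"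
  have "?d \<le> 0 + e" if "0 < e" for e
  proof -
    have "0 \<le> c"
      by (simp add: c_def)
    with \<open>0 < e\<close> have "0 < e / (c + 1)"
      by simp
    then have "?d \<le> 2 * (e / (c + 1)) * measure M1 A * measure M2 B"
      by (rule fubini_continuous_compact_support_approx[OF assms])
    also have "\<dots> = e / (c + 1) * c"
      by (simp add: c_def)
    also have "\<dots> \<le> e"
      using \<open>0 < e\<close> \<open>0 \<le> c\<close> by (simp add: field_simps)
    finally show ?thesis
      by simp
  qed
  then have "?d \<le> 0"
    by (rule field_le_epsilon)
  then show ?thesis
    by simp
qed

section \<open>Haar measure\<close>

locale locally_compact_haar =
  fixes \<mu> :: "'a::{topological_group_add, t2_space} measure"
  assumes locally_compact: "locally_compact_space (euclidean :: 'a topology)"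
    and left_haar: "left_haar_measure \<mu>"
begin

lemma sets_haar: "sets \<mu> = sets borel"
  using left_haar by (simp add: left_haar_measure_def)

lemma emeasure_haar_translate: "A \<in> sets borel \<Longrightarrow> emeasure \<mu> ((+) g ` A) = emeasure \<mu> A"
  using left_haar by (simp add: left_haar_measure_def)

lemma emeasure_haar_compact: "compact C \<Longrightarrow> emeasure \<mu> C < \<infinity>"
  using left_haar by (simp add: left_haar_measure_def)

lemma emeasure_haar_open_pos: "open U \<Longrightarrow> U \<noteq> {} \<Longrightarrow> 0 < emeasure \<mu> U"
  using left_haar by (simp add: left_haar_measure_def)

lemma integrable_haar:
  fixes g :: "'a \<Rightarrow> 'b::{banach, second_countable_topology}"
  assumes "continuous_on UNIV g" "has_compact_support g"
  shows "integrable \<mu> g"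
proof -
  obtain C where "compact C" "\<And>x. x \<notin> C \<Longrightarrow> g x = 0"
    using assms(2) has_compact_supportE by blast
  then show ?thesis
    by (intro integrable_continuous_vanishing_outside[OF sets_haar assms(1)] emeasure_haar_compact)
       auto
qed

lemma integral_haar_left_translate:
  "continuous_on UNIV g \<Longrightarrow> (\<integral>x. g (a + x) \<partial>\<mu>) = integral\<^sup>L \<mu> (g :: _ \<Rightarrow> 'b::{banach, second_countable_topology})"
  by (rule integral_left_translate[OF sets_haar emeasure_haar_translate])

lemma integral_haar_pos:
  fixes g :: "'a \<Rightarrow> real"
  assumes "continuous_on UNIV g" "has_compact_support g" "\<And>x. 0 \<le> g x" "0 < g p"
  shows "0 < integral\<^sup>L \<mu> g"
proof (rule integral_pos_if_pos_on[OF integrable_haar[OF assms(1,2)] assms(3)])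
  have "open {x. 0 < g x}"
    using assms(1) by (simp add: open_Collect_less)
  moreover have "{x. 0 < g x} \<noteq> {}"
    using assms(4) by blast
  ultimately show "{x. 0 < g x} \<in> sets \<mu>" and "emeasure \<mu> {x. 0 < g x} \<noteq> 0"
    using emeasure_haar_open_pos[of "{x. 0 < g x}"] by (simp_all add: sets_haar)
qed simp

lemma continuous_on_integral_haar:
  fixes F :: "'b::topological_space \<Rightarrow> 'a \<Rightarrow> 'c::{banach, second_countable_topology}"
  assumes "continuous_on UNIV (\<lambda>p. F (fst p) (snd p))" "compact C" "\<And>x y. y \<notin> C \<Longrightarrow> F x y = 0"
  shows "continuous_on UNIV (\<lambda>x. \<integral>y. F x y \<partial>\<mu>)"
proof (rule continuous_on_parametric_integral[OF sets_haar assms(1)])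
  show "\<exists>N B. open N \<and> p \<in> N \<and> compact B \<and> emeasure \<mu> B < \<infinity> \<and>
      (AE y in \<mu>. y \<notin> B \<longrightarrow> (\<forall>x\<in>N. F x y = 0))" for p
    using assms(2,3) emeasure_haar_compact[OF assms(2)] by (intro exI[of _ UNIV] exI[of _ C]) auto
qed

lemma fubini_haar:
  fixes F :: "'a \<Rightarrow> 'a \<Rightarrow> 'c::{banach, second_countable_topology}"
  assumes "continuous_on UNIV (\<lambda>p. F (fst p) (snd p))" "has_compact_support (\<lambda>p. F (fst p) (snd p))"
  shows "(\<integral>x. (\<integral>y. F x y \<partial>\<mu>) \<partial>\<mu>) = (\<integral>y. (\<integral>x. F x y \<partial>\<mu>) \<partial>\<mu>)"
proof -
  obtain C where C: "compact C" "\<And>p. p \<notin> C \<Longrightarrow> F (fst p) (snd p) = 0"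
    using assms(2) has_compact_supportE by blast
  have A: "compact (fst ` C)" and B: "compact (snd ` C)"
    using C(1) by (simp_all add: compact_continuous_image continuous_on_fst continuous_on_snd)
  have "F x y = 0" if "x \<notin> fst ` C \<or> y \<notin> snd ` C" for x y
    using that C(2)[of "(x, y)"] by force
  then show ?thesis
    by (intro fubini_continuous_compact_support[OF sets_haar sets_haar A emeasure_haar_compact[OF A]
          B emeasure_haar_compact[OF B] assms(1)] AE_I2) auto
qed

lemma continuous_on_integral_right_translate:
  fixes G :: "'a \<Rightarrow> 'b::{banach, second_countable_topology}"
  assumes G: "continuous_on UNIV G" "has_compact_support G"
  shows "continuous_on UNIV (\<lambda>y. \<integral>x. G (x + y) \<partial>\<mu>)"
proof (rule continuous_on_parametric_integral[OF sets_haar])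
  show "continuous_on UNIV (\<lambda>p. G (snd p + fst p))"
    by (rule continuous_on_UNIV_compose[OF G(1)]) (intro continuous_intros)
  obtain C where C: "compact C" "\<And>x. x \<notin> C \<Longrightarrow> G x = 0"
    using G(2) has_compact_supportE by blast
  fix p :: 'a
  obtain U L where UL: "open U" "compact L" "{p} \<subseteq> U" "U \<subseteq> L"
    using compact_neighbourhoodE[OF locally_compact compact_sing[of p]] .
  define B where "B = (\<lambda>q. fst q + - snd q) ` (C \<times> L)"
  have "compact B"
    unfolding B_def using C(1) UL(2)
    by (intro compact_continuous_image compact_Times) (auto intro!: continuous_intros)
  moreover have "G (x + y) = 0" if "x \<notin> B" "y \<in> U" for x y
  proof (rule C(2))
    show "x + y \<notin> C"
      using that UL(4) unfolding B_def by (force simp: add.assoc intro: image_eqI[of _ _ "(x + y, y)"])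
  qed
  ultimately show "\<exists>N B. open N \<and> p \<in> N \<and> compact B \<and> emeasure \<mu> B < \<infinity> \<and>
      (AE x in \<mu>. x \<notin> B \<longrightarrow> (\<forall>y\<in>N. G (x + y) = 0))"
    using UL(1,3) emeasure_haar_compact by blast
qed

lemma integral_reflect_mult_right_translate:
  fixes a b :: "'a \<Rightarrow> complex"
  assumes a: "continuous_on UNIV a" "has_compact_support a"
    and b: "continuous_on UNIV b" "has_compact_support b"
  shows "(\<integral>y. a (- y) * (\<integral>x. b (x + y) \<partial>\<mu>) \<partial>\<mu>) = integral\<^sup>L \<mu> a * integral\<^sup>L \<mu> b"
proof -
  note [continuous_intros] = continuous_on_UNIV_compose[OF a(1)] continuous_on_UNIV_compose[OF b(1)]
  have support: "has_compact_support (\<lambda>p. a (fst p) * b (snd p))"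
    by (rule has_compact_support_times[OF a(2) b(2)])
  have "(\<integral>y. a (- y) * (\<integral>x. b (x + y) \<partial>\<mu>) \<partial>\<mu>) = (\<integral>y. (\<integral>x. a (- y) * b (x + y) \<partial>\<mu>) \<partial>\<mu>)"
    by simp
  also have "\<dots> = (\<integral>x. (\<integral>y. a (- y) * b (x + y) \<partial>\<mu>) \<partial>\<mu>)"
  proof (rule fubini_haar)
    have "has_compact_support (\<lambda>p. (\<lambda>q. a (fst q) * b (snd q)) (- fst p, snd p + fst p))"
      by (rule has_compact_support_compose[OF support, where \<psi>="\<lambda>q. (- fst q, snd q + fst q)"])
         (auto intro!: continuous_intros simp: add.assoc)
    then show "has_compact_support (\<lambda>p. a (- fst p) * b (snd p + fst p))"
      by simp
  qed (intro continuous_intros)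
  also have "\<dots> = (\<integral>x. (\<integral>y. a (- y + x) * b y \<partial>\<mu>) \<partial>\<mu>)"
  proof (rule Bochner_Integration.integral_cong[OF refl])
    fix x
    have "(\<integral>y. a (- (- x + y)) * b (x + (- x + y)) \<partial>\<mu>) = (\<integral>y. a (- y) * b (x + y) \<partial>\<mu>)"
      by (rule integral_haar_left_translate) (intro continuous_intros)
    then show "(\<integral>y. a (- y) * b (x + y) \<partial>\<mu>) = (\<integral>y. a (- y + x) * b y \<partial>\<mu>)"
      by (simp add: minus_add add.assoc)
  qed
  also have "\<dots> = (\<integral>y. (\<integral>x. a (- y + x) * b y \<partial>\<mu>) \<partial>\<mu>)"
  proof (rule fubini_haar)
    have "has_compact_support (\<lambda>p. (\<lambda>q. a (fst q) * b (snd q)) (- snd p + fst p, snd p))"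
      by (rule has_compact_support_compose[OF support, where \<psi>="\<lambda>q. (snd q + fst q, snd q)"])
         (auto intro!: continuous_intros)
    then show "has_compact_support (\<lambda>p. a (- snd p + fst p) * b (snd p))"
      by simp
  qed (intro continuous_intros)
  also have "\<dots> = (\<integral>y. integral\<^sup>L \<mu> a * b y \<partial>\<mu>)"
    using integral_haar_left_translate[OF a(1)] by simp
  also have "\<dots> = integral\<^sup>L \<mu> a * integral\<^sup>L \<mu> b"
    by simp
  finally show ?thesis .
qed

lemma continuous_eq_zero_if_integral_reflect_mult_zero:
  fixes D :: "'a \<Rightarrow> complex"
  assumes D: "continuous_on UNIV D"
    and orthogonal: "\<And>a. continuous_on UNIV a \<Longrightarrow> has_compact_support a \<Longrightarrow> (\<integral>y. a (- y) * D y \<partial>\<mu>) = 0"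
  shows "D y = 0"
proof (rule ccontr)
  assume "D y \<noteq> 0"
  obtain \<phi> :: "'a \<Rightarrow> real" where \<phi>: "continuous_on UNIV \<phi>" "\<And>x. 0 \<le> \<phi> x"
    "\<And>x. x \<in> {- y} \<Longrightarrow> \<phi> x = 1" "has_compact_support \<phi>"
    using Urysohn_compact_support[OF locally_compact compact_sing[of "- y"]] by metis
  note [continuous_intros] = continuous_on_UNIV_compose[OF D] continuous_on_UNIV_compose[OF \<phi>(1)]
  define q where "q x = (cmod (D x))\<^sup>2 * \<phi> (- x)" for x
  have "has_compact_support (\<lambda>x. \<phi> (- x))"
    by (rule has_compact_support_compose[OF \<phi>(4), where \<psi>=uminus]) (auto intro: continuous_intros)
  then have "0 < integral\<^sup>L \<mu> q"
    unfolding q_def using \<phi>(2) \<phi>(3)[of "- y"] \<open>D y \<noteq> 0\<close>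
    by (intro integral_haar_pos[of _ y] has_compact_support_mult_right continuous_intros) auto
  moreover have "complex_of_real (integral\<^sup>L \<mu> q) = (\<integral>x. cnj (D (- (- x))) * \<phi> (- x) * D x \<partial>\<mu>)"
  proof -
    have "complex_of_real (q x) = cnj (D (- (- x))) * \<phi> (- x) * D x" for x
      unfolding q_def of_real_mult complex_norm_square by simp
    then show ?thesis
      by (simp flip: integral_complex_of_real)
  qed
  moreover have "(\<integral>x. cnj (D (- (- x))) * \<phi> (- x) * D x \<partial>\<mu>) = 0"
  proof (rule orthogonal)
    show "continuous_on UNIV (\<lambda>x. cnj (D (- x)) * complex_of_real (\<phi> x))"
      by (intro continuous_intros)
    show "has_compact_support (\<lambda>x. cnj (D (- x)) * complex_of_real (\<phi> x))"
      by (intro has_compact_support_mult_right has_compact_support_comp_zero[OF \<phi>(4)]) simp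
  qed
  ultimately show False
    by simp
qed

lemma integral_right_translate_proportional:
  fixes G b :: "'a \<Rightarrow> complex"
  assumes G: "continuous_on UNIV G" "has_compact_support G"
    and b: "continuous_on UNIV b" "has_compact_support b"
  shows "(\<integral>x. G (x + y) \<partial>\<mu>) * integral\<^sup>L \<mu> b = (\<integral>x. b (x + y) \<partial>\<mu>) * integral\<^sup>L \<mu> G"
proof -
  define \<rho>G where "\<rho>G y = (\<integral>x. G (x + y) \<partial>\<mu>)" for y
  define \<rho>b where "\<rho>b y = (\<integral>x. b (x + y) \<partial>\<mu>)" for y
  note [continuous_intros] = continuous_on_UNIV_compose[OF continuous_on_integral_right_translate[OF G]]
    continuous_on_UNIV_compose[OF continuous_on_integral_right_translate[OF b]]
  have "\<rho>G y * integral\<^sup>L \<mu> b - \<rho>b y * integral\<^sup>L \<mu> G = 0"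
  proof (rule continuous_eq_zero_if_integral_reflect_mult_zero)
    show "continuous_on UNIV (\<lambda>y. \<rho>G y * integral\<^sup>L \<mu> b - \<rho>b y * integral\<^sup>L \<mu> G)"
      unfolding \<rho>G_def \<rho>b_def by (intro continuous_intros)
    fix a :: "'a \<Rightarrow> complex"
    assume a: "continuous_on UNIV a" "has_compact_support a"
    note [continuous_intros] = continuous_on_UNIV_compose[OF a(1)]
    have "has_compact_support (\<lambda>y. a (- y))"
      by (rule has_compact_support_compose[OF a(2), where \<psi>=uminus]) (auto intro: continuous_intros)
    then have integrable: "integrable \<mu> (\<lambda>y. a (- y) * \<rho>G y)" "integrable \<mu> (\<lambda>y. a (- y) * \<rho>b y)"
      unfolding \<rho>G_def \<rho>b_def by (auto intro!: integrable_haar continuous_intros has_compact_support_mult_left)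
    have "(\<integral>y. a (- y) * (\<rho>G y * integral\<^sup>L \<mu> b - \<rho>b y * integral\<^sup>L \<mu> G) \<partial>\<mu>)
        = (\<integral>y. a (- y) * \<rho>G y * integral\<^sup>L \<mu> b - a (- y) * \<rho>b y * integral\<^sup>L \<mu> G \<partial>\<mu>)"
      by (simp add: algebra_simps)
    also have "\<dots> = (\<integral>y. a (- y) * \<rho>G y \<partial>\<mu>) * integral\<^sup>L \<mu> b - (\<integral>y. a (- y) * \<rho>b y \<partial>\<mu>) * integral\<^sup>L \<mu> G"
      using integrable by simp
    also have "\<dots> = 0"
      unfolding \<rho>G_def \<rho>b_def
      by (simp add: integral_reflect_mult_right_translate[OF a G] integral_reflect_mult_right_translate[OF a b])
    finally show "(\<integral>y. a (- y) * (\<rho>G y * integral\<^sup>L \<mu> b - \<rho>b y * integral\<^sup>L \<mu> G) \<partial>\<mu>) = 0" .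
  qed
  then show ?thesis
    by (simp add: \<rho>G_def \<rho>b_def)
qed

end

locale locally_compact_haar_subgroup = locally_compact_haar \<mu> for \<mu> :: "'a::{topological_group_add, t2_space} measure" +
  fixes K :: "'a set" and \<nu> :: "'a measure"
  assumes compact_subgroup: "compact_subgroup K"
    and normalized_haar: "normalized_haar_on K \<nu>"
begin

lemma compact_K: "compact K"
  and zero_K: "0 \<in> K"
  and minus_K: "a \<in> K \<Longrightarrow> - a \<in> K"
  using compact_subgroup by (simp_all add: compact_subgroup_def)

lemma sets_nu: "sets \<nu> = sets borel"
  using normalized_haar by (simp add: normalized_haar_on_def)

lemma AE_nu_K: "AE k in \<nu>. k \<in> K"
proof (rule AE_I')
  show "- K \<in> null_sets \<nu>"
    using normalized_haar compact_imp_closed[OF compact_K]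
    by (simp add: normalized_haar_on_def null_sets_def sets_nu borel_open open_Compl)
qed auto

lemma emeasure_nu_K: "emeasure \<nu> K = 1"
  using normalized_haar by (simp add: normalized_haar_on_def)

lemma measure_nu_space [simp]: "measure \<nu> (space \<nu>) = 1"
proof -
  have "emeasure \<nu> (space \<nu>) = emeasure \<nu> K"
    using AE_nu_K compact_K
    by (intro emeasure_eq_AE)
       (auto simp: sets_nu borel_closed compact_imp_closed sets_eq_imp_space_eq[OF sets_nu])
  then show ?thesis
    by (simp add: emeasure_nu_K measure_def)
qed

lemma integral_nu_left_translate:
  "k \<in> K \<Longrightarrow> continuous_on UNIV g \<Longrightarrow> (\<integral>x. g (k + x) \<partial>\<nu>) = integral\<^sup>L \<nu> (g :: _ \<Rightarrow> 'b::{banach, second_countable_topology})"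
  using normalized_haar by (intro integral_left_translate[OF sets_nu]) (simp_all add: normalized_haar_on_def)

lemma integral_nu_cong_K:
  fixes f g :: "'a \<Rightarrow> 'b::{banach, second_countable_topology}"
  assumes "continuous_on UNIV f" "continuous_on UNIV g" "\<And>k. k \<in> K \<Longrightarrow> f k = g k"
  shows "integral\<^sup>L \<nu> f = integral\<^sup>L \<nu> g"
  using AE_nu_K assms(3)
  by (intro integral_cong_AE borel_measurable_continuous_on_UNIV[OF sets_nu] assms(1,2)) auto

lemma continuous_on_integral_nu:
  fixes F :: "'b::topological_space \<Rightarrow> 'a \<Rightarrow> 'c::{banach, second_countable_topology}"
  assumes "continuous_on UNIV (\<lambda>p. F (fst p) (snd p))"
  shows "continuous_on UNIV (\<lambda>x. \<integral>k. F x k \<partial>\<nu>)"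
proof (rule continuous_on_parametric_integral[OF sets_nu assms])
  show "\<exists>N B. open N \<and> p \<in> N \<and> compact B \<and> emeasure \<nu> B < \<infinity> \<and>
      (AE k in \<nu>. k \<notin> B \<longrightarrow> (\<forall>x\<in>N. F x k = 0))" for p
    using AE_nu_K compact_K emeasure_nu_K by (intro exI[of _ UNIV] exI[of _ K]) (auto elim: AE_mp)
qed

lemma fubini_haar_nu:
  fixes F :: "'a \<Rightarrow> 'a \<Rightarrow> 'c::{banach, second_countable_topology}"
  assumes "continuous_on UNIV (\<lambda>p. F (fst p) (snd p))" "compact C" "\<And>x k. x \<notin> C \<Longrightarrow> F x k = 0"
  shows "(\<integral>x. (\<integral>k. F x k \<partial>\<nu>) \<partial>\<mu>) = (\<integral>k. (\<integral>x. F x k \<partial>\<mu>) \<partial>\<nu>)"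
proof (rule fubini_continuous_compact_support[OF sets_haar sets_nu assms(2) emeasure_haar_compact[OF assms(2)]
      compact_K _ assms(1)])
  show "AE k in \<nu>. k \<notin> K \<longrightarrow> (\<forall>x. F x k = 0)"
    using AE_nu_K by eventually_elim simp
qed (use assms(3) emeasure_nu_K in auto)

lemma has_compact_support_right_average:
  fixes u :: "'a \<Rightarrow> 'b::{banach, second_countable_topology}"
  assumes u: "continuous_on UNIV u" "has_compact_support u"
  shows "has_compact_support (\<lambda>z. \<integral>k. u (z + k) \<partial>\<nu>)"
proof -
  obtain C where C: "compact C" "\<And>x. x \<notin> C \<Longrightarrow> u x = 0"
    using u(2) has_compact_supportE by blast
  note [continuous_intros] = continuous_on_UNIV_compose[OF u(1)]
  define B where "B = (\<lambda>q. fst q + - snd q) ` (C \<times> K)"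
  have "(\<integral>k. u (z + k) \<partial>\<nu>) = 0" if "z \<notin> B" for z
  proof -
    have "u (z + k) = 0" if "k \<in> K" for k
      using \<open>z \<notin> B\<close> that unfolding B_def
      by (intro C(2)) (force simp: add.assoc intro: image_eqI[of _ _ "(z + k, k)"])
    then have "(\<integral>k. u (z + k) \<partial>\<nu>) = (\<integral>k. 0 \<partial>\<nu>)"
      by (intro integral_nu_cong_K continuous_intros) auto
    then show ?thesis
      by simp
  qed
  moreover have "compact B"
    unfolding B_def using C(1) compact_K
    by (intro compact_continuous_image compact_Times) (auto intro!: continuous_intros)
  ultimately show ?thesis
    unfolding has_compact_support_def by blast
qed

lemma right_invariant_bump_exists:
  obtains b :: "'a \<Rightarrow> complex" where "continuous_on UNIV b" "has_compact_support b"
    "\<And>z k. k \<in> K \<Longrightarrow> b (z + k) = b z" "integral\<^sup>L \<mu> b \<noteq> 0"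
proof -
  obtain u :: "'a \<Rightarrow> real" where u: "continuous_on UNIV u" "\<And>x. 0 \<le> u x"
    "\<And>x. x \<in> K \<Longrightarrow> u x = 1" "has_compact_support u"
    using Urysohn_compact_support[OF locally_compact compact_K] by metis
  note [continuous_intros] = continuous_on_UNIV_compose[OF u(1)]
  define r where "r z = (\<integral>k. u (z + k) \<partial>\<nu>)" for z
  have r_continuous: "continuous_on UNIV r"
    unfolding r_def by (rule continuous_on_integral_nu) (intro continuous_intros)
  have r_invariant: "r (z + k) = r z" if "k \<in> K" for z k
    using integral_nu_left_translate[OF that, of "\<lambda>k'. u (z + k')"]
    by (simp add: r_def add.assoc continuous_intros)
  have r_support: "has_compact_support r"
    unfolding r_def[abs_def] by (rule has_compact_support_right_average[OF u(1,4)])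
  have "r 0 = (\<integral>k. 1 \<partial>\<nu>)"
    unfolding r_def using u(3) by (intro integral_nu_cong_K continuous_intros) auto
  then have "0 < integral\<^sup>L \<mu> r"
    using u(2) by (intro integral_haar_pos[OF r_continuous r_support, of 0]) (auto simp: r_def)
  show thesis
  proof (rule that)
    show "continuous_on UNIV (\<lambda>z. complex_of_real (r z))"
      by (intro continuous_intros r_continuous)
    show "has_compact_support (\<lambda>z. complex_of_real (r z))"
      by (rule has_compact_support_comp_zero[OF r_support]) simp
    show "complex_of_real (r (z + k)) = complex_of_real (r z)" if "k \<in> K" for z k
      using r_invariant[OF that] by simp
    show "(\<integral>z. complex_of_real (r z) \<partial>\<mu>) \<noteq> 0"
      using \<open>0 < integral\<^sup>L \<mu> r\<close> by simp
  qed
qed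

lemma integral_haar_right_translate:
  fixes G :: "'a \<Rightarrow> complex"
  assumes "k \<in> K" "continuous_on UNIV G" "has_compact_support G"
  shows "(\<integral>z. G (z + k) \<partial>\<mu>) = integral\<^sup>L \<mu> G"
proof -
  obtain b :: "'a \<Rightarrow> complex" where b: "continuous_on UNIV b" "has_compact_support b"
    "\<And>z k. k \<in> K \<Longrightarrow> b (z + k) = b z" "integral\<^sup>L \<mu> b \<noteq> 0"
    using right_invariant_bump_exists by blast
  have "(\<integral>z. b (z + k) \<partial>\<mu>) = integral\<^sup>L \<mu> b"
    using b(3) assms(1) by simp
  then show ?thesis
    using integral_right_translate_proportional[OF assms(2,3) b(1,2), of k] b(4) by simp
qed

lemma integral_right_average:
  fixes g \<Phi> :: "'a \<Rightarrow> complex"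
  assumes g: "continuous_on UNIV g" "has_compact_support g"
    and \<Phi>: "continuous_on UNIV \<Phi>" "has_compact_support \<Phi>" "\<And>z k. k \<in> K \<Longrightarrow> \<Phi> (z + k) = \<Phi> z"
  shows "(\<integral>z. (\<integral>k. g (z + k) \<partial>\<nu>) * \<Phi> z \<partial>\<mu>) = (\<integral>z. g z * \<Phi> z \<partial>\<mu>)"
proof -
  obtain C where C: "compact C" "\<And>z. z \<notin> C \<Longrightarrow> \<Phi> z = 0"
    using \<Phi>(2) has_compact_supportE by blast
  note [continuous_intros] = continuous_on_UNIV_compose[OF g(1)] continuous_on_UNIV_compose[OF \<Phi>(1)]
  have "(\<integral>z. (\<integral>k. g (z + k) \<partial>\<nu>) * \<Phi> z \<partial>\<mu>) = (\<integral>z. (\<integral>k. g (z + k) * \<Phi> z \<partial>\<nu>) \<partial>\<mu>)"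
    by simp
  also have "\<dots> = (\<integral>k. (\<integral>z. g (z + k) * \<Phi> z \<partial>\<mu>) \<partial>\<nu>)"
    by (rule fubini_haar_nu[OF _ C(1)]) (simp_all add: C(2) continuous_intros)
  also have "\<dots> = (\<integral>k. (\<integral>z. g z * \<Phi> z \<partial>\<mu>) \<partial>\<nu>)"
  proof (rule integral_nu_cong_K)
    show "continuous_on UNIV (\<lambda>k. \<integral>z. g (z + k) * \<Phi> z \<partial>\<mu>)"
      by (rule continuous_on_integral_haar[OF _ C(1)]) (simp_all add: C(2) continuous_intros)
    fix k
    assume "k \<in> K"
    then have "(\<integral>z. g (z + k) * \<Phi> z \<partial>\<mu>) = (\<integral>z. g (z + k) * \<Phi> (z + k) \<partial>\<mu>)"
      using \<Phi>(3) by simp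
    also have "\<dots> = (\<integral>z. g z * \<Phi> z \<partial>\<mu>)"
      using \<open>k \<in> K\<close> has_compact_support_mult_right[OF \<Phi>(2), of g]
      by (intro integral_haar_right_translate[of k "\<lambda>z. g z * \<Phi> z"] continuous_intros) auto
    finally show "(\<integral>z. g (z + k) * \<Phi> z \<partial>\<mu>) = (\<integral>z. g z * \<Phi> z \<partial>\<mu>)" .
  qed simp
  also have "\<dots> = (\<integral>z. g z * \<Phi> z \<partial>\<mu>)"
    by simp
  finally show ?thesis .
qed

lemma integral_sharp_mult:
  fixes h \<Phi> :: "'a \<Rightarrow> complex"
  assumes h: "continuous_on UNIV h" "has_compact_support h"
    and \<Phi>: "continuous_on UNIV \<Phi>" "has_compact_support \<Phi>" "\<And>z k. k \<in> K \<Longrightarrow> \<Phi> (z + k) = \<Phi> z"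
  shows "(\<integral>z. sharp \<nu> h z * \<Phi> z \<partial>\<mu>) = (\<integral>k. (\<integral>z. h (k + z) * \<Phi> z \<partial>\<mu>) \<partial>\<nu>)"
proof -
  obtain C where C: "compact C" "\<And>z. z \<notin> C \<Longrightarrow> \<Phi> z = 0"
    using \<Phi>(2) has_compact_supportE by blast
  note [continuous_intros] = continuous_on_UNIV_compose[OF h(1)] continuous_on_UNIV_compose[OF \<Phi>(1)]
  have "continuous_on UNIV (\<lambda>p. \<integral>k2. h (snd p + fst p + k2) \<partial>\<nu>)"
    by (rule continuous_on_integral_nu) (intro continuous_intros)
  note [continuous_intros] = continuous_on_UNIV_compose[OF this]
  have "(\<integral>z. sharp \<nu> h z * \<Phi> z \<partial>\<mu>) = (\<integral>z. (\<integral>k1. (\<integral>k2. h (k1 + z + k2) \<partial>\<nu>) * \<Phi> z \<partial>\<nu>) \<partial>\<mu>)"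
    by (simp add: sharp_def)
  also have "\<dots> = (\<integral>k1. (\<integral>z. (\<integral>k2. h (k1 + z + k2) \<partial>\<nu>) * \<Phi> z \<partial>\<mu>) \<partial>\<nu>)"
    by (rule fubini_haar_nu[OF _ C(1)]) (simp_all add: C(2) continuous_intros)
  also have "\<dots> = (\<integral>k1. (\<integral>z. h (k1 + z) * \<Phi> z \<partial>\<mu>) \<partial>\<nu>)"
  proof (rule Bochner_Integration.integral_cong[OF refl])
    fix k1
    have "has_compact_support (\<lambda>z. h (k1 + z))"
      by (rule has_compact_support_compose[OF h(2), where \<psi>="\<lambda>w. - k1 + w"])
         (auto intro: continuous_intros)
    then show "(\<integral>z. (\<integral>k2. h (k1 + z + k2) \<partial>\<nu>) * \<Phi> z \<partial>\<mu>) = (\<integral>z. h (k1 + z) * \<Phi> z \<partial>\<mu>)"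
      using integral_right_average[of "\<lambda>z. h (k1 + z)", OF _ _ \<Phi>]
      by (simp add: add.assoc continuous_intros)
  qed
  finally show ?thesis .
qed

lemma sharp_right_invariant:
  fixes F :: "'a \<Rightarrow> complex"
  assumes "continuous_on UNIV F" "\<And>w k. k \<in> K \<Longrightarrow> F (w + k) = F w"
  shows "sharp \<nu> F x = (\<integral>k. F (k + x) \<partial>\<nu>)"
  unfolding sharp_def
proof (rule Bochner_Integration.integral_cong[OF refl])
  fix k1
  note [continuous_intros] = continuous_on_UNIV_compose[OF assms(1)]
  have "(\<integral>k2. F (k1 + x + k2) \<partial>\<nu>) = (\<integral>k2. F (k1 + x) \<partial>\<nu>)"
    using assms(2) by (intro integral_nu_cong_K continuous_intros) auto
  then show "(\<integral>k2. F (k1 + x + k2) \<partial>\<nu>) = F (k1 + x)"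
    by simp
qed

end

section \<open>The weighted convolution\<close>

definition wconv_kernel :: "('a::group_add \<Rightarrow> real) \<Rightarrow> ('a \<Rightarrow> complex) \<Rightarrow> 'a \<Rightarrow> 'a \<Rightarrow> complex" where
  "wconv_kernel \<omega> f x z = f (- z + x) * complex_of_real (\<omega> z * \<omega> (- z + x) / \<omega> x)"

lemma wconv_eq_kernel: "wconv \<mu> \<omega> g f x = (\<integral>z. g z * wconv_kernel \<omega> f x z \<partial>\<mu>)"
  unfolding wconv_def wconv_kernel_def by (simp add: mult.assoc)

lemma continuous_on_wconv_kernel:
  fixes f :: "'a::topological_group_add \<Rightarrow> complex"
  assumes "weight \<omega>" "continuous_on UNIV f"
  shows "continuous_on UNIV (\<lambda>p. wconv_kernel \<omega> f (fst p) (snd p))"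
proof -
  have \<omega>: "continuous_on UNIV \<omega>" "\<And>x. \<omega> x \<noteq> 0"
    using assms(1) unfolding weight_def by (simp, metis less_irrefl)
  note [continuous_intros] = continuous_on_UNIV_compose[OF \<omega>(1)] continuous_on_UNIV_compose[OF assms(2)]
  show ?thesis
    unfolding wconv_kernel_def by (intro continuous_intros) (simp add: \<omega>(2))
qed

lemma has_compact_support_wconv_kernel:
  fixes f :: "'a::topological_group_add \<Rightarrow> complex"
  assumes "has_compact_support f"
  shows "has_compact_support (wconv_kernel \<omega> f x)"
  unfolding wconv_kernel_def[abs_def]
  by (intro has_compact_support_mult_left has_compact_support_compose[OF assms, where \<psi>="\<lambda>w. x + - w"])
     (intro continuous_intros, simp only: minus_add minus_minus add_minus_cancel)

lemma bi_invariant_left: "bi_invariant K f \<Longrightarrow> 0 \<in> K \<Longrightarrow> k \<in> K \<Longrightarrow> f (k + x) = f x"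
  unfolding bi_invariant_def by (metis add.right_neutral)

lemma bi_invariant_right: "bi_invariant K f \<Longrightarrow> 0 \<in> K \<Longrightarrow> k \<in> K \<Longrightarrow> f (x + k) = f x"
  unfolding bi_invariant_def by (metis add.left_neutral)

lemma wconv_kernel_right_invariant:
  assumes "bi_invariant K \<omega>" "bi_invariant K f" "0 \<in> K" "k \<in> K" "- k \<in> K"
  shows "wconv_kernel \<omega> f x (z + k) = wconv_kernel \<omega> f x z"
proof -
  have "- (z + k) + x = - k + (- z + x)"
    by (simp only: minus_add add.assoc)
  then show ?thesis
    unfolding wconv_kernel_def
    by (simp only: bi_invariant_left[OF assms(2,3,5)] bi_invariant_left[OF assms(1,3,5)]
        bi_invariant_right[OF assms(1,3,4)])
qed

lemma wconv_kernel_left_translate: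
  assumes "bi_invariant K \<omega>" "0 \<in> K" "k \<in> K"
  shows "wconv_kernel \<omega> f (k + x) (k + z) = wconv_kernel \<omega> f x z"
proof -
  have "- (k + z) + (k + x) = - z + x"
    by (simp only: minus_add add.assoc minus_add_cancel)
  then show ?thesis
    unfolding wconv_kernel_def using bi_invariant_left[OF assms] by simp
qed

context locally_compact_haar_subgroup
begin

lemma continuous_on_wconv:
  assumes "weight \<omega>" "continuous_on UNIV h" "has_compact_support h" "continuous_on UNIV f"
  shows "continuous_on UNIV (wconv \<mu> \<omega> h f)"
proof -
  obtain C where C: "compact C" "\<And>z. z \<notin> C \<Longrightarrow> h z = 0"
    using assms(3) has_compact_supportE by blast
  note [continuous_intros] = continuous_on_UNIV_compose[OF assms(2)]
  have "continuous_on UNIV (\<lambda>x. \<integral>z. h z * wconv_kernel \<omega> f x z \<partial>\<mu>)"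
  proof (rule continuous_on_integral_haar[OF _ C(1)])
    show "continuous_on UNIV (\<lambda>p. h (snd p) * wconv_kernel \<omega> f (fst p) (snd p))"
      by (intro continuous_on_mult continuous_on_wconv_kernel[OF assms(1,4)] continuous_intros)
  qed (simp add: C(2))
  then show ?thesis
    unfolding wconv_eq_kernel[abs_def] .
qed

lemma wconv_right_invariant:
  assumes "bi_invariant K \<omega>" "bi_invariant K f" "k \<in> K"
  shows "wconv \<mu> \<omega> h f (w + k) = wconv \<mu> \<omega> h f w"
  unfolding wconv_def add.assoc[symmetric]
  by (simp only: bi_invariant_right[OF assms(1) zero_K assms(3)] bi_invariant_right[OF assms(2) zero_K assms(3)])

lemma wconv_left_translate:
  assumes "weight \<omega>" "bi_invariant K \<omega>" "continuous_on UNIV h" "continuous_on UNIV f" "k \<in> K"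
  shows "wconv \<mu> \<omega> h f (k + x) = (\<integral>z. h (k + z) * wconv_kernel \<omega> f x z \<partial>\<mu>)"
proof -
  note [continuous_intros] = continuous_on_UNIV_compose[OF assms(3)]
    continuous_on_UNIV_curry[OF continuous_on_wconv_kernel[OF assms(1,4)]]
  have "(\<integral>z. h (k + z) * wconv_kernel \<omega> f (k + x) (k + z) \<partial>\<mu>) = wconv \<mu> \<omega> h f (k + x)"
    unfolding wconv_eq_kernel
    by (rule integral_haar_left_translate[where g="\<lambda>y. h y * wconv_kernel \<omega> f (k + x) y"])
       (intro continuous_intros)
  then show ?thesis
    using wconv_kernel_left_translate[OF assms(2) zero_K assms(5)] by simp
qed

lemma sharp_wconv:
  assumes \<omega>: "weight \<omega>" "bi_invariant K \<omega>"
    and h: "continuous_on UNIV h" "has_compact_support h"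
    and f: "continuous_on UNIV f" "has_compact_support f" "bi_invariant K f"
  shows "sharp \<nu> (wconv \<mu> \<omega> h f) x = (\<integral>k. (\<integral>z. h (k + z) * wconv_kernel \<omega> f x z \<partial>\<mu>) \<partial>\<nu>)"
proof -
  obtain C where C: "compact C" "\<And>z. z \<notin> C \<Longrightarrow> wconv_kernel \<omega> f x z = 0"
    using has_compact_support_wconv_kernel[OF f(2)] has_compact_supportE by blast
  note [continuous_intros] = continuous_on_UNIV_compose[OF h(1)]
    continuous_on_UNIV_compose[OF continuous_on_wconv[OF \<omega>(1) h f(1)]]
    continuous_on_UNIV_compose[OF continuous_on_UNIV_curry[OF continuous_on_wconv_kernel[OF \<omega>(1) f(1)]]]
  have "sharp \<nu> (wconv \<mu> \<omega> h f) x = (\<integral>k. wconv \<mu> \<omega> h f (k + x) \<partial>\<nu>)"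
    using wconv_right_invariant[OF \<omega>(2) f(3)]
    by (intro sharp_right_invariant continuous_on_wconv[OF \<omega>(1) h f(1)])
  also have "\<dots> = (\<integral>k. (\<integral>z. h (k + z) * wconv_kernel \<omega> f x z \<partial>\<mu>) \<partial>\<nu>)"
  proof (rule integral_nu_cong_K)
    show "continuous_on UNIV (\<lambda>k. \<integral>z. h (k + z) * wconv_kernel \<omega> f x z \<partial>\<mu>)"
      by (rule continuous_on_integral_haar[OF _ C(1)]) (intro continuous_intros, simp add: C(2))
  qed (intro continuous_intros, simp add: wconv_left_translate[OF \<omega> h(1) f(1)])
  finally show ?thesis .
qed

lemma wconv_sharp:
  assumes \<omega>: "weight \<omega>" "bi_invariant K \<omega>"
    and h: "continuous_on UNIV h" "has_compact_support h"
    and f: "continuous_on UNIV f" "has_compact_support f" "bi_invariant K f"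
  shows "wconv \<mu> \<omega> (sharp \<nu> h) f x = (\<integral>k. (\<integral>z. h (k + z) * wconv_kernel \<omega> f x z \<partial>\<mu>) \<partial>\<nu>)"
  unfolding wconv_eq_kernel
proof (rule integral_sharp_mult[OF h])
  show "continuous_on UNIV (wconv_kernel \<omega> f x)"
    by (rule continuous_on_UNIV_curry[OF continuous_on_wconv_kernel[OF \<omega>(1) f(1)]])
  show "has_compact_support (wconv_kernel \<omega> f x)"
    by (rule has_compact_support_wconv_kernel[OF f(2)])
  show "wconv_kernel \<omega> f x (z + k) = wconv_kernel \<omega> f x z" if "k \<in> K" for z k
    using that by (intro wconv_kernel_right_invariant[OF \<omega>(2) f(3) zero_K] minus_K)
qed

end

theorem mainTheorem1:
  fixes \<mu> \<nu> :: "'a::{topological_group_add, t2_space} measure"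
    and K :: "'a set" and \<omega> :: "'a \<Rightarrow> real"
  assumes "locally_compact_space (euclidean :: 'a topology)"
    and "left_haar_measure \<mu>"
    and "compact_subgroup K"
    and "normalized_haar_on K \<nu>"
    and "weight \<omega>" and "bi_invariant K \<omega>"
    and "f \<in> Cc_bi K" and "h \<in> Cc"
  shows "sharp \<nu> (wconv \<mu> \<omega> h f) = wconv \<mu> \<omega> (sharp \<nu> h) f"
proof
  interpret locally_compact_haar_subgroup \<mu> K \<nu>
    using assms(1-4) by unfold_locales
  have f: "continuous_on UNIV f" "has_compact_support f" "bi_invariant K f"
    using assms(7) has_compact_support_Cc by (auto simp: Cc_bi_def Cc_def)
  have h: "continuous_on UNIV h" "has_compact_support h"
    using assms(8) has_compact_support_Cc by (auto simp: Cc_def)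
  show "sharp \<nu> (wconv \<mu> \<omega> h f) x = wconv \<mu> \<omega> (sharp \<nu> h) f x" for x
    using sharp_wconv[OF assms(5,6) h f] wconv_sharp[OF assms(5,6) h f] by simp
qed

end
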